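(* Let $H\in\mathbb{R}^{n\times n}$ be symmetric with $\lambda_{\min}(H)<0$ and unit eigenvector $v_1$ for $\lambda_{\min}(H)$, let $g\in\mathbb{R}^n$ with $g^\intercal v_1\neq0$, let $f(z)=\frac12z^\intercal Hz+g^\intercal z$ and $\beta=\|H\|_{\mathrm{op}}$. Let $0<\eta<1/\beta$ and $z_0=-\alpha\frac{g}{\|g\|}$ with $0<\alpha<\min\big(1,\frac{\|g\|^3}{|g^\intercal Hg|}\big)$, and let $z_{s+1}=z_s-\eta\nabla f(z_s)$ for $s\ge0$. Suppose $t$ is such that $\|z_s\|\le 1$ for $s=0,\dots,t$ and $z_t^\intercal\nabla f(z_t)\le 0$. Then $z_t^\intercal H\nabla f(z_t)\ge \beta\, z_t^\intercal\nabla f(z_t)$.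
   Context: $\nabla f(z)=Hz+g$; $\|H\|_{\mathrm{op}}$ is the operator norm. *)

theory Defs
  imports "HOL-Analysis.Analysis"
begin

definition is_min_eigenvalue :: "real^'n^'n \<Rightarrow> real \<Rightarrow> bool" where
  "is_min_eigenvalue H lam \<longleftrightarrow>
     (\<exists>v. v \<noteq> 0 \<and> H *v v = lam *\<^sub>R v) \<and>
     (\<forall>mu v. v \<noteq> 0 \<and> H *v v = mu *\<^sub>R v \<longrightarrow> lam \<le> mu)"

text \<open>Gradient of f(z) = 1/2 z^T H z + g^T z.\<close>
definition gradf :: "real^'n^'n \<Rightarrow> real^'n \<Rightarrow> real^'n \<Rightarrow> real^'n" where
  "gradf H g z = H *v z + g"

end

theory Submission
  imports Defs
begin

text \<open>Put \<open>R = I - \<eta>H\<close>, \<open>a = \<alpha>/\<parallel>g\<parallel>\<close>, \<open>\<theta> = min (1/a) \<beta>\<close> and \<open>P = \<theta>I - H\<close>.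
  The gradients obey \<open>\<nabla>f(z\<^sub>s) = R\<^sup>s \<nabla>f(z\<^sub>0)\<close> and the iterates
  \<open>z\<^sub>t = -a R\<^sup>t g - \<eta> (\<Sum>k<t. R\<^sup>k g)\<close>, so by symmetry \<open>-z\<^sub>t \<bullet> P \<nabla>f(z\<^sub>t)\<close> is a
  nonnegative combination of the numbers \<open>g \<bullet> R\<^sup>m P \<nabla>f(z\<^sub>0)\<close>. These are all
  nonnegative: \<open>P \<nabla>f(z\<^sub>0) = (1 - a\<theta>) P g + a P\<^sup>2 g\<close>, the operators \<open>R\<close> and \<open>P\<close>
  commute, \<open>R\<close> is positive semidefinite because \<open>\<eta>\<beta> \<le> 1\<close>, and \<open>P\<close> is positive
  semidefinite whenever \<open>a\<theta> < 1\<close>, i.e. \<open>\<theta> = \<beta>\<close>. Hence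
  \<open>z\<^sub>t \<bullet> H \<nabla>f(z\<^sub>t) \<ge> \<theta> z\<^sub>t \<bullet> \<nabla>f(z\<^sub>t) \<ge> \<beta> z\<^sub>t \<bullet> \<nabla>f(z\<^sub>t)\<close>, the last step because
  \<open>z\<^sub>t \<bullet> \<nabla>f(z\<^sub>t) \<le> 0\<close>.\<close>

definition self_adjoint :: "('a::real_inner \<Rightarrow> 'a) \<Rightarrow> bool" where
  "self_adjoint A \<longleftrightarrow> (\<forall>x y. A x \<bullet> y = x \<bullet> A y)"

definition positive_semidefinite :: "('a::real_inner \<Rightarrow> 'a) \<Rightarrow> bool" where
  "positive_semidefinite A \<longleftrightarrow> (\<forall>x. 0 \<le> x \<bullet> A x)"

lemma inner_le_onorm:
  assumes "bounded_linear A"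
  shows "x \<bullet> A x \<le> onorm A * (x \<bullet> x)"
proof -
  have "x \<bullet> A x \<le> norm x * norm (A x)" by (rule norm_cauchy_schwarz)
  also have "\<dots> \<le> norm x * (onorm A * norm x)" by (simp add: mult_left_mono onorm[OF assms])
  also have "\<dots> = onorm A * (x \<bullet> x)" by (simp add: power2_eq_square flip: power2_norm_eq_inner)
  finally show ?thesis .
qed

lemma linear_funpow:
  fixes A :: "'a::real_vector \<Rightarrow> 'a"
  shows "linear A \<Longrightarrow> linear (A ^^ n)"
proof (induction n)
  case (Suc n)
  then show ?case using linear_compose[of "A ^^ n" A] by (simp only: funpow.simps(2))
qed (simp add: linear_iff)

lemma self_adjoint_funpow: "self_adjoint A \<Longrightarrow> self_adjoint (A ^^ n)"
  by (induction n) (simp_all add: self_adjoint_def funpow_swap1)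

lemma funpow_comp_commute: "A \<circ> B = B \<circ> A \<Longrightarrow> (A ^^ n) (B x) = B ((A ^^ n) x)"
  by (induction n) (simp_all add: fun_eq_iff)

lemma positive_semidefinite_funpow_comp:
  assumes "self_adjoint A" and "A \<circ> B = B \<circ> A"
    and "positive_semidefinite B" and "positive_semidefinite (A \<circ> B)"
  shows "positive_semidefinite ((A ^^ n) \<circ> B)"
  unfolding positive_semidefinite_def
proof
  fix x
  have adj: "(A ^^ j) x \<bullet> y = x \<bullet> (A ^^ j) y" for j y
    using self_adjoint_funpow[OF assms(1)] by (simp add: self_adjoint_def)
  have "\<exists>j. n = j + j \<or> n = Suc (j + j)" by presburger
  then obtain j where "n = j + j \<or> n = Suc (j + j)" ..
  then show "0 \<le> x \<bullet> ((A ^^ n) \<circ> B) x"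
  proof
    assume "n = j + j"
    then have "x \<bullet> ((A ^^ n) \<circ> B) x = (A ^^ j) x \<bullet> B ((A ^^ j) x)"
      by (simp add: funpow_add adj funpow_comp_commute[OF assms(2)])
    then show ?thesis using assms(3) by (simp add: positive_semidefinite_def)
  next
    assume "n = Suc (j + j)"
    then have "((A ^^ n) \<circ> B) x = (A ^^ j) ((A \<circ> B) ((A ^^ j) x))"
      by (simp add: funpow_add funpow_comp_commute[OF assms(2)] flip: funpow_swap1)
    then have "x \<bullet> ((A ^^ n) \<circ> B) x = (A ^^ j) x \<bullet> (A \<circ> B) ((A ^^ j) x)"
      by (simp only: adj)
    then show ?thesis using assms(4) by (simp add: positive_semidefinite_def)
  qed
qed

lemma self_adjoint_shift: "self_adjoint A \<Longrightarrow> self_adjoint (\<lambda>x. c *\<^sub>R x - d *\<^sub>R A x)"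
  by (simp add: self_adjoint_def inner_diff_left inner_diff_right)

lemma positive_semidefinite_shift:
  assumes "bounded_linear A" and "0 \<le> d" and "d * onorm A \<le> c"
  shows "positive_semidefinite (\<lambda>x. c *\<^sub>R x - d *\<^sub>R A x)"
  unfolding positive_semidefinite_def
proof
  fix x
  have "d * (x \<bullet> A x) \<le> d * onorm A * (x \<bullet> x)"
    using mult_left_mono[OF inner_le_onorm[OF assms(1)] assms(2)] by (simp add: mult.assoc)
  also have "\<dots> \<le> c * (x \<bullet> x)" by (simp add: assms(3) mult_right_mono)
  finally show "0 \<le> x \<bullet> (c *\<^sub>R x - d *\<^sub>R A x)" by (simp add: inner_diff_right)
qed

lemma shift_comp_commute:
  assumes "linear A"
  shows "(\<lambda>x. c *\<^sub>R x - d *\<^sub>R A x) \<circ> (\<lambda>x. c' *\<^sub>R x - d' *\<^sub>R A x)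
       = (\<lambda>x. c' *\<^sub>R x - d' *\<^sub>R A x) \<circ> (\<lambda>x. c *\<^sub>R x - d *\<^sub>R A x)"
  by (simp add: fun_eq_iff linear_diff[OF assms] linear_scale[OF assms] algebra_simps)

lemma positive_semidefinite_add_square:
  assumes "self_adjoint P" and "positive_semidefinite P" and "0 \<le> c" and "0 \<le> d"
  shows "positive_semidefinite (\<lambda>x. c *\<^sub>R P x + d *\<^sub>R P (P x))"
  unfolding positive_semidefinite_def
proof
  fix x
  have "x \<bullet> P (P x) = P x \<bullet> P x" using assms(1) by (simp add: self_adjoint_def)
  then show "0 \<le> x \<bullet> (c *\<^sub>R P x + d *\<^sub>R P (P x))"
    using assms(2-4) by (simp add: positive_semidefinite_def inner_add_right)
qed

lemma affine_recurrence_closed_form: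
  assumes "linear R" and "\<And>s. z (Suc s) = R (z s) + b"
  shows "z s = (R ^^ s) (z 0) + (\<Sum>k<s. (R ^^ k) b)"
proof (induction s)
  case (Suc s)
  have "z (Suc s) = (R ^^ Suc s) (z 0) + (\<Sum>k<s. (R ^^ Suc k) b) + b"
    by (simp add: assms(2) Suc linear_add[OF assms(1)] linear_sum[OF assms(1)])
  then show ?case unfolding sum.lessThan_Suc_shift by (simp add: algebra_simps)
qed simp

lemma initial_gradient_weight_nonneg:
  fixes A :: "'a::real_inner \<Rightarrow> 'a"
  assumes bl: "bounded_linear A" and adj: "self_adjoint A"
    and eta: "0 \<le> \<eta>" "\<eta> * onorm A \<le> 1" and a: "0 < a"
    and \<theta>_def: "\<theta> = min (1 / a) (onorm A)"
  defines "R \<equiv> \<lambda>x. x - \<eta> *\<^sub>R A x" and "P \<equiv> \<lambda>x. \<theta> *\<^sub>R x - A x"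
  shows "0 \<le> g \<bullet> (R ^^ m) (P (g - a *\<^sub>R A g))"
proof -
  have lin: "linear A" using bl by (rule bounded_linear.linear)
  have R_adj: "self_adjoint R" using self_adjoint_shift[OF adj, of 1 \<eta>] by (simp add: R_def)
  have P_adj: "self_adjoint P" using self_adjoint_shift[OF adj, of \<theta> 1] by (simp add: P_def)
  have RP: "R \<circ> P = P \<circ> R" using shift_comp_commute[OF lin, of 1 \<eta> \<theta> 1] by (simp add: R_def P_def)
  have R_psd: "positive_semidefinite R"
    using positive_semidefinite_shift[OF bl eta(1), of 1] eta(2) by (simp add: R_def)
  have Rm_psd: "positive_semidefinite (R ^^ m)"
    using positive_semidefinite_funpow_comp[OF R_adj, of id m] R_psd
    by (simp add: positive_semidefinite_def)
  have Rm_lin: "linear (R ^^ m)"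
    by (rule linear_funpow) (simp add: R_def lin linear_compose_sub linear_compose_scale_right linear_id[unfolded id_def])
  have "g - a *\<^sub>R A g = (1 - a * \<theta>) *\<^sub>R g + a *\<^sub>R P g" by (simp add: P_def algebra_simps)
  then have split: "g \<bullet> (R ^^ m) (P (g - a *\<^sub>R A g))
      = (1 - a * \<theta>) * (g \<bullet> (R ^^ m) (P g)) + a * (g \<bullet> (R ^^ m) (P (P g)))"
    by (simp add: P_def lin Rm_lin linear_add linear_diff linear_scale algebra_simps)
  have "g \<bullet> (R ^^ m) (P (P g)) = P g \<bullet> (R ^^ m) (P g)"
    using P_adj by (simp add: funpow_comp_commute[OF RP] self_adjoint_def)
  then have square_term: "0 \<le> g \<bullet> (R ^^ m) (P (P g))"
    using Rm_psd by (simp add: positive_semidefinite_def)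
  have first_term: "0 \<le> (1 - a * \<theta>) * (g \<bullet> (R ^^ m) (P g))"
  proof (cases "a * \<theta> = 1")
    case False
    then have \<theta>: "\<theta> = onorm A" and "a * \<theta> < 1"
      using a by (auto simp: \<theta>_def min_def field_simps split: if_splits)
    have P_psd: "positive_semidefinite P"
      using positive_semidefinite_shift[OF bl, of 1 \<theta>] \<theta> by (simp add: P_def)
    have "R \<circ> P = (\<lambda>x. (1 - \<eta> * \<theta>) *\<^sub>R P x + \<eta> *\<^sub>R P (P x))"
      by (simp add: fun_eq_iff R_def P_def lin linear_diff linear_scale algebra_simps)
    then have "positive_semidefinite (R \<circ> P)"
      using positive_semidefinite_add_square[OF P_adj P_psd _ eta(1), of "1 - \<eta> * \<theta>"] \<theta> eta(2)
      by simp
    then have "positive_semidefinite ((R ^^ m) \<circ> P)"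
      using positive_semidefinite_funpow_comp[OF R_adj RP P_psd] by simp
    then show ?thesis
      using \<open>a * \<theta> < 1\<close> by (simp add: positive_semidefinite_def)
  qed simp
  show ?thesis using split first_term square_term a by simp
qed

theorem gradient_descent_quadratic_inner_ge:
  fixes A :: "'a::real_inner \<Rightarrow> 'a"
  assumes bl: "bounded_linear A" and adj: "self_adjoint A"
    and eta: "0 \<le> \<eta>" "\<eta> * onorm A \<le> 1" and a: "0 < a"
    and z0: "z 0 = - (a *\<^sub>R g)" and step: "\<And>s. z (Suc s) = z s - \<eta> *\<^sub>R (A (z s) + g)"
    and descent: "z t \<bullet> (A (z t) + g) \<le> 0"
  shows "onorm A * (z t \<bullet> (A (z t) + g)) \<le> z t \<bullet> A (A (z t) + g)"
proof -
  have lin: "linear A" using bl by (rule bounded_linear.linear)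
  define R where "R = (\<lambda>x. x - \<eta> *\<^sub>R A x)"
  define \<theta> where "\<theta> = min (1 / a) (onorm A)"
  define P where "P = (\<lambda>x. \<theta> *\<^sub>R x - A x)"
  define w where "w = P (g - a *\<^sub>R A g)"
  have R_lin: "linear R"
    by (simp add: R_def lin linear_compose_sub linear_compose_scale_right linear_id[unfolded id_def])
  have Rk_adj: "(R ^^ k) x \<bullet> y = x \<bullet> (R ^^ k) y" for k x y
    using self_adjoint_funpow[OF self_adjoint_shift[OF adj, of 1 \<eta>], of k] by (simp add: self_adjoint_def R_def)
  have RP: "R \<circ> P = P \<circ> R" using shift_comp_commute[OF lin, of 1 \<eta> \<theta> 1] by (simp add: R_def P_def)
  have "A (z s) + g = (R ^^ s) (g - a *\<^sub>R A g)" for s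
    by (induction s) (simp_all add: z0 step R_def lin linear_add linear_diff linear_scale linear_neg algebra_simps)
  then have Pu: "P (A (z t) + g) = (R ^^ t) w"
    by (simp add: w_def funpow_comp_commute[OF RP])
  have "z (Suc s) = R (z s) + - (\<eta> *\<^sub>R g)" for s
    by (simp add: step R_def lin linear_add algebra_simps)
  then have zt: "z t = (R ^^ t) (- (a *\<^sub>R g)) + (\<Sum>k<t. (R ^^ k) (- (\<eta> *\<^sub>R g)))"
    using affine_recurrence_closed_form[OF R_lin] z0 by metis
  have weight: "0 \<le> g \<bullet> (R ^^ m) w" for m
    unfolding w_def P_def R_def by (rule initial_gradient_weight_nonneg[OF bl adj eta a \<theta>_def])
  have "z t \<bullet> P (A (z t) + g) = z t \<bullet> (R ^^ t) w" by (simp only: Pu)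
  also have "\<dots> = - (a * (g \<bullet> (R ^^ (t + t)) w)) - \<eta> * (\<Sum>k<t. g \<bullet> (R ^^ (k + t)) w)"
    by (simp add: zt Rk_adj funpow_add inner_add_left inner_sum_left sum_distrib_left sum_negf)
  also have "\<dots> \<le> 0"
    using weight a eta(1) by (smt (verit) mult_nonneg_nonneg sum_nonneg)
  finally have "\<theta> * (z t \<bullet> (A (z t) + g)) \<le> z t \<bullet> A (A (z t) + g)"
    by (simp add: P_def inner_diff_right)
  moreover have "onorm A * (z t \<bullet> (A (z t) + g)) \<le> \<theta> * (z t \<bullet> (A (z t) + g))"
    using descent by (simp add: \<theta>_def mult_right_mono_neg)
  ultimately show ?thesis by linarith
qed

lemma self_adjoint_matrix_vector_mult:
  fixes H :: "real^'n^'n"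
  assumes "transpose H = H"
  shows "self_adjoint ((*v) H)"
  unfolding self_adjoint_def
proof (intro allI)
  fix x y :: "real^'n"
  have "(H *v x) \<bullet> y = (x v* H) \<bullet> y" by (metis assms transpose_matrix_vector)
  also have "\<dots> = x \<bullet> (H *v y)" by (rule dot_lmul_matrix)
  finally show "(H *v x) \<bullet> y = x \<bullet> (H *v y)" .
qed

theorem lemma4:
  fixes H :: "real^'n^'n" and g v1 :: "real^'n" and lam beta eta alpha :: real
    and z :: "nat \<Rightarrow> real^'n" and t :: nat
  assumes symH: "transpose H = H"
    and minev: "is_min_eigenvalue H lam" and lam_neg: "lam < 0"
    and v1_eig: "H *v v1 = lam *\<^sub>R v1" and v1_unit: "norm v1 = 1"
    and gv1: "g \<bullet> v1 \<noteq> 0"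
    and beta_def: "beta = onorm (\<lambda>x. H *v x)"
    and eta_pos: "0 < eta" and eta_lt: "eta < 1 / beta"
    and alpha_pos: "0 < alpha" and alpha_lt1: "alpha < 1"
    and alpha_lt2: "alpha * \<bar>g \<bullet> (H *v g)\<bar> < norm g ^ 3"
    and z0: "z 0 = - (alpha / norm g) *\<^sub>R g"
    and zstep: "\<And>s. z (Suc s) = z s - eta *\<^sub>R gradf H g (z s)"
    and zbound: "\<And>s. s \<le> t \<Longrightarrow> norm (z s) \<le> 1"
    and zt: "z t \<bullet> gradf H g (z t) \<le> 0"
  shows "z t \<bullet> (H *v gradf H g (z t)) \<ge> beta * (z t \<bullet> gradf H g (z t))"
proof -
  have beta: "beta = onorm ((*v) H)" using beta_def by simp
  have "0 < beta"
    using eta_pos eta_lt onorm_pos_le[OF matrix_vector_mul_bounded_linear, of H] beta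
    by (cases "beta = 0") auto
  then have "eta * onorm ((*v) H) \<le> 1" using eta_lt beta by (simp add: field_simps)
  moreover have "g \<noteq> 0" using gv1 by auto
  then have "0 < alpha / norm g" using alpha_pos by simp
  ultimately show ?thesis
    using gradient_descent_quadratic_inner_ge[OF matrix_vector_mul_bounded_linear
        self_adjoint_matrix_vector_mult[OF symH], of eta "alpha / norm g" z g t]
      eta_pos z0 zstep zt beta
    by (simp add: gradf_def)
qed

end
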